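(* Let $\omega$ be a circle with center $O$ and $\xi$ an ellipse with center $O$ lying inside $\omega$. Let $(u_1,\dots,u_n)$ be a Poncelet $n$-gon for the pair $(\omega,\xi)$. Then $\sum_{i=1}^n\cos\angle u_iOu_{i+1}$ is constant in the Poncelet family of $n$-gons containing $(u_1,\dots,u_n)$.
   Context: Indices are mod $n$. A Poncelet $n$-gon for a pair of conics $(C,D)$, $D$ inside $C$, is a closed polygon with all vertices on $C$ and all sides tangent to $D$. By the Poncelet porism, if one such closed $n$-gon exists, then starting from any point of $C$ and successively drawing tangent lines to $D$ (in the same rotational sense) produces a closed $n$-gon; the Poncelet family is this continuous 1-parameter family. $\angle u_iOu_{i+1}\in[0,\pi]$ is the angle between the vectors $u_i-O$ and $u_{i+1}-O$. *)

theory Defs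
  imports "HOL-Analysis.Analysis"
begin

definition angle_at :: "complex \<Rightarrow> complex \<Rightarrow> complex \<Rightarrow> real" where
  "angle_at c u v = arccos (((u - c) \<bullet> (v - c)) / (norm (u - c) * norm (v - c)))"

definition ellipse :: "complex \<Rightarrow> real \<Rightarrow> real \<Rightarrow> real \<Rightarrow> complex set" where
  "ellipse c a b phi = {c + cis phi * Complex (a * cos t) (b * sin t) | t. True}"

definition line_through :: "complex \<Rightarrow> complex \<Rightarrow> complex set" where
  "line_through p q = {p + of_real t * (q - p) | t. True}"

text \<open>The line through p, q is tangent to the (smooth, strictly convex) conic D:
  it meets D in exactly one point.\<close>
definition tangent_line :: "complex set \<Rightarrow> complex \<Rightarrow> complex \<Rightarrow> bool" where
  "tangent_line D p q \<longleftrightarrow> p \<noteq> q \<and> (\<exists>!z. z \<in> D \<and> z \<in> line_through p q)"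

text \<open>Closed Poncelet n-gon (u 0, ..., u (n-1)) for (C, D), indices mod n:
  vertices on C, every side tangent to D, and at every vertex the two sides
  are different tangent lines (the polygon is obtained by successively drawing
  tangents, it never goes back along the same tangent).\<close>
definition poncelet_ngon :: "complex set \<Rightarrow> complex set \<Rightarrow> nat \<Rightarrow> (nat \<Rightarrow> complex) \<Rightarrow> bool" where
  "poncelet_ngon C D n u \<longleftrightarrow> 3 \<le> n \<and>
     (\<forall>i<n. u i \<in> C \<and> tangent_line D (u i) (u (Suc i mod n))
            \<and> u (Suc (Suc i) mod n) \<noteq> u i)"

text \<open>Rotational sense of a polygon around c (sign of the oriented area of
  the first side seen from c).\<close>
definition rot_sense :: "complex \<Rightarrow> (nat \<Rightarrow> complex) \<Rightarrow> real" where
  "rot_sense c u = sgn (Im (cnj (u 0 - c) * (u 1 - c)))"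

definition poncelet_family :: "complex \<Rightarrow> complex set \<Rightarrow> complex set \<Rightarrow> nat \<Rightarrow> (nat \<Rightarrow> complex) \<Rightarrow> (nat \<Rightarrow> complex) set" where
  "poncelet_family c C D n u = {v. poncelet_ngon C D n v \<and> rot_sense c v = rot_sense c u}"

end

theory Submission
  imports Defs
begin

text \<open>After a similarity the circle is the unit circle and the ellipse has semi-axes
  \<alpha>, \<beta> < 1 along the coordinate axes. The tangent with outer normal cis \<theta> lies at
  distance h(\<theta>) = sqrt (\<alpha>^2 cos^2 \<theta> + \<beta>^2 sin^2 \<theta>) from the centre and cuts the circle
  in the chord from cis (\<theta> - a(\<theta>)) to cis (\<theta> + a(\<theta>)), where a = arccos h; the cosine of
  its central angle is 2 h^2 - 1 = \<alpha>^2 + \<beta>^2 - 1 + (\<alpha>^2 - \<beta>^2) cos (2 \<theta>). So it suffices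
  that the sum of cos (2 \<theta>_i) over the sides depends only on n.

  The Poncelet map \<theta> - a(\<theta>) \<mapsto> \<theta> + a(\<theta>) preserves an explicit measure \<sigma>, and for
  W' = \<sigma> cos (2 \<theta>) the difference W (\<theta> + a(\<theta>)) - W (\<theta> - a(\<theta>)) - cos (2 \<theta>) is constant.
  Lifted to the real line, a closed polygon of winding number k turns both relations into
  telescoping sums, giving n c = k L and \<Sum> cos (2 \<theta>_i) + n K = k L_W for constants
  c, K, L, L_W of the ellipse alone; eliminating k shows that the sum is n times a constant.\<close>

section \<open>Similarities of the plane\<close>

lemma line_through_affine:
  fixes c s p q :: complex
  shows "line_through (c + s * p) (c + s * q) = (\<lambda>z. c + s * z) ` line_through p q"
proof -
  have "c + s * p + of_real t * (c + s * q - (c + s * p)) = c + s * (p + of_real t * (q - p))" for t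
    by (simp add: algebra_simps)
  then show ?thesis unfolding line_through_def by (force simp: image_iff)
qed

lemma ex1_image_iff:
  assumes "inj f"
  shows "(\<exists>!z. z \<in> f ` S) \<longleftrightarrow> (\<exists>!w. w \<in> S)"
proof
  assume "\<exists>!z. z \<in> f ` S"
  then obtain w where w: "w \<in> S" and uniq: "\<And>y. y \<in> f ` S \<Longrightarrow> y = f w" by blast
  have "w' = w" if "w' \<in> S" for w'
    using uniq[of "f w'"] that injD[OF assms] by blast
  with w show "\<exists>!w. w \<in> S" by blast
next
  assume "\<exists>!w. w \<in> S"
  then obtain w where "w \<in> S" and "\<And>w'. w' \<in> S \<Longrightarrow> w' = w" by blast
  then show "\<exists>!z. z \<in> f ` S" by blast
qed

lemma tangent_line_affine:
  fixes c s p q :: complex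
  assumes "s \<noteq> 0"
  shows "tangent_line ((\<lambda>z. c + s * z) ` D) (c + s * p) (c + s * q) \<longleftrightarrow> tangent_line D p q"
proof -
  have inj: "inj (\<lambda>z. c + s * z)" using assms by (auto intro: injI)
  have "(\<lambda>z. c + s * z) ` D \<inter> line_through (c + s * p) (c + s * q)
      = (\<lambda>z. c + s * z) ` (D \<inter> line_through p q)"
    by (simp add: line_through_affine image_Int[OF inj])
  then have "z \<in> (\<lambda>z. c + s * z) ` D \<and> z \<in> line_through (c + s * p) (c + s * q)
      \<longleftrightarrow> z \<in> (\<lambda>z. c + s * z) ` (D \<inter> line_through p q)" for z
    by blast
  moreover have "w \<in> D \<and> w \<in> line_through p q \<longleftrightarrow> w \<in> D \<inter> line_through p q" for w
    by simp
  moreover have "c + s * p \<noteq> c + s * q \<longleftrightarrow> p \<noteq> q" using assms by simp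
  ultimately show ?thesis by (simp only: tangent_line_def ex1_image_iff[OF inj])
qed

lemma poncelet_ngon_affine:
  fixes c s :: complex
  assumes "s \<noteq> 0"
  shows "poncelet_ngon ((\<lambda>z. c + s * z) ` C) ((\<lambda>z. c + s * z) ` D) n (\<lambda>i. c + s * x i)
     \<longleftrightarrow> poncelet_ngon C D n x"
proof -
  have inj: "inj (\<lambda>z. c + s * z)" using assms by (auto intro: injI)
  show ?thesis
    unfolding poncelet_ngon_def tangent_line_affine[OF assms]
    using inj_image_mem_iff[OF inj] assms by simp
qed

lemma angle_at_affine:
  fixes c s p q :: complex
  assumes "s \<noteq> 0"
  shows "angle_at c (c + s * p) (c + s * q) = angle_at 0 p q"
proof -
  have "(s * p) \<bullet> (s * q) = ((Re s)\<^sup>2 + (Im s)\<^sup>2) * (p \<bullet> q)"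
    by (simp add: inner_complex_def power2_eq_square algebra_simps)
  then have "(s * p) \<bullet> (s * q) = (norm s)\<^sup>2 * (p \<bullet> q)"
    by (simp add: cmod_power2)
  then show ?thesis
    using assms by (simp add: angle_at_def norm_mult power2_eq_square)
qed

lemma cos_angle_at_cis: "cos (angle_at 0 (cis A) (cis B)) = cos (A - B)"
  by (simp add: angle_at_def inner_complex_def cos_diff[symmetric])

lemma sphere_affine:
  fixes c s :: complex
  assumes "s \<noteq> 0"
  shows "sphere c (norm s) = (\<lambda>z. c + s * z) ` sphere 0 1"
proof -
  have "z = c + s * ((z - c) / s)" for z using assms by simp
  then show ?thesis using assms
    by (auto simp: dist_norm norm_mult norm_divide norm_minus_commute image_iff
        intro!: bexI[of _ "(_ - c) / s"])
qed

lemma ellipse_affine: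
  assumes "R \<noteq> 0"
  shows "ellipse c a b phi = (\<lambda>z. c + (of_real R * cis phi) * z) ` ellipse 0 (a / R) (b / R) 0"
proof -
  have "c + cis phi * Complex (a * cos t) (b * sin t)
      = c + (of_real R * cis phi) * (0 + cis 0 * Complex (a / R * cos t) (b / R * sin t))" for t
    using assms by (simp add: complex_eq_iff algebra_simps)
  moreover have "ellipse c a b phi = range (\<lambda>t. c + cis phi * Complex (a * cos t) (b * sin t))"
    for c a b phi by (auto simp: ellipse_def)
  ultimately show ?thesis by (simp only: image_image)
qed

lemma ellipse_subset_ball_semi_axes:
  assumes "ellipse c a b phi \<subseteq> ball c R"
  shows "\<bar>a\<bar> < R" and "\<bar>b\<bar> < R"
proof -
  have "c + cis phi * Complex (a * cos t) (b * sin t) \<in> ball c R" for t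
    using assms unfolding ellipse_def by blast
  from this[of 0] this[of "pi / 2"] show "\<bar>a\<bar> < R" "\<bar>b\<bar> < R"
    by (simp_all add: dist_norm norm_mult complex_norm)
qed

section \<open>Chords of the unit circle\<close>

lemma cis_eq_cis_iff: "cis a = cis b \<longleftrightarrow> (\<exists>j::int. a = b + of_int j * (2 * pi))"
proof -
  have "cis a = cis b \<longleftrightarrow> sin a = sin b \<and> cos a = cos b" by (auto simp: complex_eq_iff)
  then show ?thesis unfolding sin_cos_eq_iff by (simp add: ac_simps)
qed

lemma unit_circle_chord:
  assumes "norm x = 1" and "norm y = 1" and "x \<noteq> y"
  obtains p d where "0 < d" "d < pi" "x = cis (p - d)" "y = cis (p + d)"
proof -
  have on_circle: "z = cis (Arg z)" if "norm z = 1" for z :: complex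
  proof -
    have "z \<noteq> 0" using that by auto
    then show ?thesis using cis_Arg[of z] that by (simp add: sgn_div_norm)
  qed
  obtain \<theta> \<theta>' where x: "x = cis \<theta>" and y0: "y = cis \<theta>'"
    using on_circle assms(1,2) by blast
  define e where "e = 2 * pi * frac ((\<theta>' - \<theta>) / (2 * pi))"
  have e_bounds: "0 \<le> e" "e < 2 * pi"
    by (simp_all add: e_def frac_lt_1)
  have "\<theta> + e = \<theta>' + of_int (- \<lfloor>(\<theta>' - \<theta>) / (2 * pi)\<rfloor>) * (2 * pi)"
    by (simp add: e_def frac_def field_simps)
  then have "cis (\<theta> + e) = cis \<theta>'" unfolding cis_eq_cis_iff by blast
  then have y: "y = cis (\<theta> + e)" using y0 by simp
  have "e \<noteq> 0" using assms(3) x y by auto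
  show thesis
  proof (rule that)
    show "0 < e / 2" "e / 2 < pi" using e_bounds \<open>e \<noteq> 0\<close> by simp_all
    show "x = cis ((\<theta> + e / 2) - e / 2)" "y = cis ((\<theta> + e / 2) + e / 2)" using x y by (simp_all add: add.commute)
  qed
qed

lemma line_through_cis:
  assumes "sin d \<noteq> 0"
  shows "z \<in> line_through (cis (p - d)) (cis (p + d)) \<longleftrightarrow> Re (z * cis (- p)) = cos d"
proof
  assume "z \<in> line_through (cis (p - d)) (cis (p + d))"
  then obtain t where t: "z = cis (p - d) + of_real t * (cis (p + d) - cis (p - d))"
    by (auto simp: line_through_def)
  have "z * cis (- p) = cis (- d) + of_real t * (cis d - cis (- d))"
    unfolding t by (simp add: algebra_simps cis_mult)
  then show "Re (z * cis (- p)) = cos d" by simp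
next
  assume re: "Re (z * cis (- p)) = cos d"
  define t where "t = (Im (z * cis (- p)) + sin d) / (2 * sin d)"
  have rotated: "z * cis (- p) = cis (- d) + of_real t * (cis d - cis (- d))"
    using assms re by (simp add: complex_eq_iff t_def)
  have "z = z * cis (- p) * cis p" by (simp add: mult.assoc cis_mult)
  also have "\<dots> = (cis (- d) + of_real t * (cis d - cis (- d))) * cis p" by (simp only: rotated)
  also have "\<dots> = cis (- d) * cis p + of_real t * (cis d * cis p - cis (- d) * cis p)"
    by (simp add: algebra_simps)
  also have "\<dots> = cis (p - d) + of_real t * (cis (p + d) - cis (p - d))"
    by (simp add: cis_mult add.commute)
  finally show "z \<in> line_through (cis (p - d)) (cis (p + d))"
    by (auto simp: line_through_def)
qed

text \<open>Reflecting the point (c0, s0) in the line spanned by (A, B) yields a second point of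
  the unit circle on the same line; uniqueness makes (c0, s0) parallel to (A, B).\<close>
lemma line_meets_unit_circle_once:
  fixes A B c0 s0 k :: real
  assumes r: "A\<^sup>2 + B\<^sup>2 > 0" and cs: "c0\<^sup>2 + s0\<^sup>2 = 1" and l: "A * c0 + B * s0 = k"
    and uq: "\<And>c1 s1. c1\<^sup>2 + s1\<^sup>2 = 1 \<Longrightarrow> A * c1 + B * s1 = k \<Longrightarrow> c1 = c0 \<and> s1 = s0"
  shows "k\<^sup>2 = A\<^sup>2 + B\<^sup>2"
proof -
  define r2 where "r2 = A\<^sup>2 + B\<^sup>2"
  define c1 where "c1 = (A\<^sup>2 - B\<^sup>2) * c0 + 2 * A * B * s0"
  define s1 where "s1 = 2 * A * B * c0 - (A\<^sup>2 - B\<^sup>2) * s0"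
  define D where "D = A * s0 - B * c0"
  have r0: "r2 > 0" using r by (simp add: r2_def)
  have "c1\<^sup>2 + s1\<^sup>2 = r2\<^sup>2 * (c0\<^sup>2 + s0\<^sup>2)"
    by (simp add: c1_def s1_def r2_def power2_eq_square algebra_simps)
  then have "(c1 / r2)\<^sup>2 + (s1 / r2)\<^sup>2 = 1"
    using r0 cs by (simp add: power_divide add_divide_distrib[symmetric])
  moreover have "A * c1 + B * s1 = r2 * k"
    by (simp add: c1_def s1_def r2_def l[symmetric] power2_eq_square algebra_simps)
  then have "A * (c1 / r2) + B * (s1 / r2) = k"
    using r0 by (simp add: add_divide_distrib[symmetric])
  ultimately have "c1 / r2 = c0" "s1 / r2 = s0" using uq by blast+
  then have "c1 - r2 * c0 = 0" "s1 - r2 * s0 = 0" using r0 by (simp_all add: field_simps)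
  moreover have "c1 - r2 * c0 = 2 * B * D" "s1 - r2 * s0 = - 2 * A * D"
    by (simp_all add: c1_def s1_def r2_def D_def power2_eq_square algebra_simps)
  ultimately have "B * D = 0" "A * D = 0" by simp_all
  moreover have "D * r2 = B * (B * D) + A * (A * D)"
    by (simp add: r2_def power2_eq_square algebra_simps)
  ultimately have "D * r2 = 0" by (metis mult_zero_right add_0)
  then have "D = 0" using r0 by simp
  moreover have "k\<^sup>2 + D\<^sup>2 = r2 * (c0\<^sup>2 + s0\<^sup>2)"
    by (simp add: l[symmetric] D_def r2_def power2_eq_square algebra_simps)
  ultimately show ?thesis using cs by (simp add: r2_def)
qed

section \<open>Closed chains on the circle\<close>

lemma shift_by_int_periods:
  fixes F :: "real \<Rightarrow> real"
  assumes "\<And>x. F (x + T) = F x + L"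
  shows "F (x + of_int k * T) = F x + of_int k * L"
proof -
  have nat_shift: "F (x + real m * T) = F x + real m * L" for x m
  proof (induction m arbitrary: x)
    case (Suc m)
    then show ?case using assms[of "x + real m * T"] by (simp add: algebra_simps)
  qed simp
  show ?thesis
  proof (cases "k \<ge> 0")
    case True
    then show ?thesis using nat_shift[of x "nat k"] by simp
  next
    case False
    then show ?thesis using nat_shift[of "x + of_int k * T" "nat (- k)"] by simp
  qed
qed

lemma continuous_has_antiderivative:
  fixes f :: "real \<Rightarrow> real"
  assumes "\<And>x. isCont f x"
  obtains F where "\<And>x. (F has_real_derivative f x) (at x)"
proof -
  have "\<exists>F. \<forall>x :: real. (-\<infinity>::ereal) < x \<longrightarrow> x < (\<infinity>::ereal) \<longrightarrow> (F has_vector_derivative f x) (at x)"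
    by (rule einterval_antiderivative) (use assms in auto)
  then show ?thesis using that by (auto simp: has_real_derivative_iff_has_vector_derivative)
qed

lemma antiderivative_periodic_shift:
  fixes F f :: "real \<Rightarrow> real"
  assumes F: "\<And>x. (F has_real_derivative f x) (at x)" and per: "\<And>x. f (x + T) = f x"
  shows "F (x + T) = F x + (F T - F 0)"
proof -
  have "((\<lambda>x. F (x + T) - F x) has_real_derivative 0) (at x)" for x
  proof -
    have "((\<lambda>x. F (x + T) - F x) has_real_derivative f (x + T) * 1 - f x) (at x)"
      by (rule derivative_eq_intros DERIV_chain2[OF F] F refl)+ simp
    then show ?thesis by (simp add: per)
  qed
  from DERIV_isconst_all[OF allI[OF this], of x 0] show ?thesis by simp
qed

text \<open>Lifting the closed chain to the real line turns the sum into a telescoping one whose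
  endpoints differ by k full turns, k being the winding number of the chain.\<close>
lemma closed_chain_sum:
  fixes P Q :: "real \<Rightarrow> real" and ps :: "nat \<Rightarrow> real"
  assumes P: "\<And>x. P (x + 2 * pi) = P x + 2 * pi" and Q: "\<And>x. Q (x + 2 * pi) = Q x + 2 * pi"
    and n: "0 < n" and chain: "\<And>i. i < n \<Longrightarrow> cis (P (ps i)) = cis (Q (ps (Suc i mod n)))"
  obtains k :: int where "\<And>(F :: real \<Rightarrow> real) L. (\<And>x. F (x + 2 * pi) = F x + L) \<Longrightarrow>
    (\<Sum>i<n. F (P (ps i)) - F (Q (ps i))) = of_int k * L"
proof -
  have P_int: "P (x + of_int j * (2 * pi)) = P x + of_int j * (2 * pi)" for x j
    by (rule shift_by_int_periods) (simp add: P)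
  have Q_int: "Q (x + of_int j * (2 * pi)) = Q x + of_int j * (2 * pi)" for x j
    by (rule shift_by_int_periods) (simp add: Q)
  define p where "p i = ps (i mod n)" for i
  have chain_p: "cis (P (p i)) = cis (Q (p (Suc i)))" for i
    using chain[of "i mod n"] n by (simp add: p_def mod_Suc_eq)
  define q where "q = rec_nat (p 0) (\<lambda>i r. p (Suc i) + (P r - Q (p (Suc i))))"
  have q0: "q 0 = p 0" and qS: "q (Suc i) = p (Suc i) + (P (q i) - Q (p (Suc i)))" for i
    by (simp_all add: q_def)
  have lift: "\<exists>j::int. q i = p i + of_int j * (2 * pi)" for i
  proof (induction i)
    case 0
    show ?case using q0 by (intro exI[of _ 0]) simp
  next
    case (Suc i)
    then obtain j :: int where j: "q i = p i + of_int j * (2 * pi)" by blast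
    obtain m :: int where m: "P (p i) = Q (p (Suc i)) + of_int m * (2 * pi)"
      using chain_p[of i] cis_eq_cis_iff by blast
    have "q (Suc i) = p (Suc i) + of_int (j + m) * (2 * pi)"
      using qS[of i] m j P_int by (simp add: algebra_simps)
    then show ?case by blast
  qed
  have link: "Q (q (Suc i)) = P (q i)" for i
  proof -
    obtain j :: int where "q (Suc i) = p (Suc i) + of_int j * (2 * pi)" using lift by blast
    then show ?thesis using qS[of i] Q_int by simp
  qed
  obtain k :: int where k: "q n = p n + of_int k * (2 * pi)" using lift by blast
  have turns: "Q (q n) = Q (q 0) + of_int k * (2 * pi)"
    using k n Q_int by (simp add: p_def q0)
  have "(\<Sum>i<n. F (P (ps i)) - F (Q (ps i))) = of_int k * L"
    if F: "\<And>x. F (x + 2 * pi) = F x + L" for F :: "real \<Rightarrow> real" and L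
  proof -
    have F_int: "F (x + of_int j * (2 * pi)) = F x + of_int j * L" for x j
      by (rule shift_by_int_periods) (simp add: F)
    have "F (P (q i)) - F (Q (q i)) = F (P (p i)) - F (Q (p i))" for i
    proof -
      obtain j :: int where "q i = p i + of_int j * (2 * pi)" using lift by blast
      then show ?thesis by (simp add: P_int Q_int F_int)
    qed
    then have "(\<Sum>i<n. F (P (ps i)) - F (Q (ps i))) = (\<Sum>i<n. F (Q (q (Suc i))) - F (Q (q i)))"
      by (intro sum.cong) (simp_all add: link p_def)
    also have "\<dots> = of_int k * L"
      using sum_lessThan_telescope[of "\<lambda>i. F (Q (q i))" n] by (simp add: turns F_int)
    finally show ?thesis .
  qed
  then show thesis by (rule that)
qed

section \<open>An ellipse inside the unit circle\<close>

locale unit_disc_ellipse =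
  fixes \<alpha> \<beta> :: real
  assumes \<alpha>_pos: "0 < \<alpha>" and \<alpha>_less_1: "\<alpha> < 1" and \<beta>_pos: "0 < \<beta>" and \<beta>_less_1: "\<beta> < 1"
begin

text \<open>The tangent to the ellipse with outer normal cis x is the line at distance support x from
  the origin; it cuts the unit circle in the chord from cis (arc_start x) to cis (arc_end x),
  of half-length half_chord x.\<close>

definition support_sq :: "real \<Rightarrow> real" where
  "support_sq x = \<alpha>\<^sup>2 * (cos x)\<^sup>2 + \<beta>\<^sup>2 * (sin x)\<^sup>2"

definition support :: "real \<Rightarrow> real" where
  "support x = sqrt (support_sq x)"

definition half_chord :: "real \<Rightarrow> real" where
  "half_chord x = sqrt (1 - support_sq x)"

definition half_arc :: "real \<Rightarrow> real" where
  "half_arc x = arccos (support x)"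

definition arc_end :: "real \<Rightarrow> real" where
  "arc_end x = x + half_arc x"

definition arc_start :: "real \<Rightarrow> real" where
  "arc_start x = x - half_arc x"

definition support_sq' :: "real \<Rightarrow> real" where
  "support_sq' x = 2 * (\<beta>\<^sup>2 - \<alpha>\<^sup>2) * cos x * sin x"

definition half_arc' :: "real \<Rightarrow> real" where
  "half_arc' x = - (support_sq' x / (2 * support x)) / half_chord x"

lemma support_sq_pos: "0 < support_sq x"
proof -
  have "0 < min (\<alpha>\<^sup>2) (\<beta>\<^sup>2)" using \<alpha>_pos \<beta>_pos by simp
  also have "min (\<alpha>\<^sup>2) (\<beta>\<^sup>2) * ((cos x)\<^sup>2 + (sin x)\<^sup>2) \<le> support_sq x"
    unfolding support_sq_def distrib_left by (intro add_mono mult_right_mono) auto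
  finally show ?thesis by simp
qed

lemma support_sq_less_1: "support_sq x < 1"
proof -
  have "support_sq x \<le> max (\<alpha>\<^sup>2) (\<beta>\<^sup>2) * ((cos x)\<^sup>2 + (sin x)\<^sup>2)"
    unfolding support_sq_def distrib_left by (intro add_mono mult_right_mono) auto
  also have "\<dots> < 1"
    using \<alpha>_pos \<alpha>_less_1 \<beta>_pos \<beta>_less_1 by (simp add: power_less_one_iff)
  finally show ?thesis .
qed

lemma support_pos: "0 < support x" and support_less_1: "support x < 1"
  using support_sq_pos[of x] support_sq_less_1[of x] by (auto simp: support_def)

lemma half_chord_pos: "0 < half_chord x"
  using support_sq_less_1[of x] by (simp add: half_chord_def)

lemma support_squared: "(support x)\<^sup>2 = support_sq x"
  using support_sq_pos[of x] by (simp add: support_def)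

lemma half_chord_squared: "(half_chord x)\<^sup>2 = 1 - support_sq x"
  using support_sq_less_1[of x] by (simp add: half_chord_def)

lemma cos_half_arc: "cos (half_arc x) = support x"
  using support_pos[of x] support_less_1[of x] by (simp add: half_arc_def)

lemma sin_half_arc: "sin (half_arc x) = half_chord x"
  using support_pos[of x] support_less_1[of x]
  by (simp add: half_arc_def sin_arccos support_squared half_chord_def)

lemma cos_arc_end: "cos (arc_end x) = cos x * support x - sin x * half_chord x"
  by (simp add: arc_end_def cos_add cos_half_arc sin_half_arc)

lemma sin_arc_end: "sin (arc_end x) = sin x * support x + cos x * half_chord x"
  by (simp add: arc_end_def sin_add cos_half_arc sin_half_arc)

lemma cos_arc_start: "cos (arc_start x) = cos x * support x + sin x * half_chord x"
  by (simp add: arc_start_def cos_diff cos_half_arc sin_half_arc)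

lemma sin_arc_start: "sin (arc_start x) = sin x * support x - cos x * half_chord x"
  by (simp add: arc_start_def sin_diff cos_half_arc sin_half_arc)

lemma arc_end_periodic: "arc_end (x + 2 * pi) = arc_end x + 2 * pi"
  and arc_start_periodic: "arc_start (x + 2 * pi) = arc_start x + 2 * pi"
  by (simp_all add: arc_end_def arc_start_def half_arc_def support_def support_sq_def)

lemma cos_chord_angle: "cos (arc_end x - arc_start x) = \<alpha>\<^sup>2 + \<beta>\<^sup>2 - 1 + (\<alpha>\<^sup>2 - \<beta>\<^sup>2) * cos (2 * x)"
proof -
  have "cos (arc_end x - arc_start x) = 2 * (support x)\<^sup>2 - 1"
    by (simp add: arc_end_def arc_start_def cos_double_cos cos_half_arc)
  also have "\<dots> = \<alpha>\<^sup>2 + \<beta>\<^sup>2 - 1 + (\<alpha>\<^sup>2 - \<beta>\<^sup>2) * (2 * (cos x)\<^sup>2 - 1)"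
    unfolding support_squared support_sq_def sin_squared_eq by (simp add: algebra_simps)
  finally show ?thesis by (simp add: cos_double_cos)
qed

lemma support_sq_deriv: "(support_sq has_real_derivative support_sq' x) (at x)"
  unfolding support_sq_def support_sq'_def
  by (rule derivative_eq_intros refl | simp)+ (simp add: power2_eq_square algebra_simps)

lemma support_deriv: "(support has_real_derivative support_sq' x / (2 * support x)) (at x)"
proof -
  have "((\<lambda>x. sqrt (support_sq x)) has_real_derivative
      (inverse (sqrt (support_sq x)) / 2) * support_sq' x) (at x)"
    by (rule DERIV_chain2[OF DERIV_real_sqrt support_sq_deriv]) (rule support_sq_pos)
  then show ?thesis by (simp add: support_def[abs_def] divide_simps mult_ac)
qed

lemma half_arc_deriv: "(half_arc has_real_derivative half_arc' x) (at x)"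
proof -
  have "((\<lambda>x. arccos (support x)) has_real_derivative
      inverse (- sqrt (1 - (support x)\<^sup>2)) * (support_sq' x / (2 * support x))) (at x)"
    by (rule DERIV_chain2[OF DERIV_arccos support_deriv])
      (use support_pos[of x] support_less_1[of x] in auto)
  then show ?thesis
    by (simp add: half_arc_def[abs_def] half_arc'_def support_squared half_chord_def[symmetric]
        divide_simps mult_ac)
qed

lemma arc_end_deriv: "(arc_end has_real_derivative 1 + half_arc' x) (at x)"
  unfolding arc_end_def[abs_def] by (rule derivative_eq_intros half_arc_deriv refl | simp)+

lemma arc_start_deriv: "(arc_start has_real_derivative 1 - half_arc' x) (at x)"
  unfolding arc_start_def[abs_def] by (rule derivative_eq_intros half_arc_deriv refl | simp)+

lemma support_sq'_less: "\<bar>support_sq' x\<bar> < 2 * support x * half_chord x"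
proof -
  have pa: "0 < \<alpha>\<^sup>2 * (1 - \<alpha>\<^sup>2)" and pb: "0 < \<beta>\<^sup>2 * (1 - \<beta>\<^sup>2)"
    using \<alpha>_pos \<alpha>_less_1 \<beta>_pos \<beta>_less_1 by (simp_all add: power_less_one_iff)
  have "0 < \<alpha>\<^sup>2 * (1 - \<alpha>\<^sup>2) * (cos x)\<^sup>2 + \<beta>\<^sup>2 * (1 - \<beta>\<^sup>2) * (sin x)\<^sup>2"
  proof (cases "cos x = 0")
    case True
    then show ?thesis using pb sin_squared_eq[of x] by simp
  next
    case False
    then show ?thesis using pa pb by (intro add_pos_nonneg) simp_all
  qed
  also have "\<dots> = support_sq x * (1 - support_sq x) - (\<beta>\<^sup>2 - \<alpha>\<^sup>2)\<^sup>2 * (cos x)\<^sup>2 * (sin x)\<^sup>2"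
    unfolding support_sq_def sin_squared_eq by (simp add: power2_eq_square algebra_simps)
  finally have "(\<beta>\<^sup>2 - \<alpha>\<^sup>2)\<^sup>2 * (cos x)\<^sup>2 * (sin x)\<^sup>2 < support_sq x * (1 - support_sq x)"
    by simp
  moreover have "(support_sq' x)\<^sup>2 = 4 * ((\<beta>\<^sup>2 - \<alpha>\<^sup>2)\<^sup>2 * (cos x)\<^sup>2 * (sin x)\<^sup>2)"
    by (simp add: support_sq'_def power_mult_distrib power2_eq_square algebra_simps)
  moreover have "(2 * support x * half_chord x)\<^sup>2 = 4 * (support_sq x * (1 - support_sq x))"
    by (simp add: power_mult_distrib support_squared half_chord_squared)
  ultimately have "(support_sq' x)\<^sup>2 < (2 * support x * half_chord x)\<^sup>2" by simp
  then have "\<bar>support_sq' x\<bar> < \<bar>2 * support x * half_chord x\<bar>"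
    using abs_le_square_iff[of "2 * support x * half_chord x" "support_sq' x"] by linarith
  then show ?thesis using support_pos[of x] half_chord_pos[of x] by simp
qed

lemma half_arc'_eq: "2 * support x * half_chord x * half_arc' x = - support_sq' x"
  using support_pos[of x] half_chord_pos[of x] by (simp add: half_arc'_def field_simps)

lemma arc_end_deriv_pos: "0 < 1 + half_arc' x" and arc_start_deriv_pos: "0 < 1 - half_arc' x"
proof -
  have p: "0 < 2 * support x * half_chord x" using support_pos half_chord_pos by simp
  have "2 * support x * half_chord x * (1 + half_arc' x) = 2 * support x * half_chord x - support_sq' x"
       "2 * support x * half_chord x * (1 - half_arc' x) = 2 * support x * half_chord x + support_sq' x"
    using half_arc'_eq[of x] by (simp_all add: algebra_simps)
  then show "0 < 1 + half_arc' x" "0 < 1 - half_arc' x"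
    using support_sq'_less[of x] p by (metis abs_less_iff diff_gt_0_iff_gt zero_less_mult_pos
        add.commute diff_minus_eq_add)+
qed

text \<open>inv_density is the density of the measure on the circle invariant under the Poncelet map
  cis (arc_start x) \<mapsto> cis (arc_end x): by Delta_arc_end and Delta_arc_start below, the
  derivatives of arc_end and arc_start are exactly compensated by inv_density.\<close>

definition Delta :: "real \<Rightarrow> real" where
  "Delta t = (1 - \<alpha>\<^sup>2 + \<beta>\<^sup>2)\<^sup>2 * (cos t)\<^sup>2 + (1 + \<alpha>\<^sup>2 - \<beta>\<^sup>2)\<^sup>2 * (sin t)\<^sup>2 - (\<alpha>\<^sup>2 + \<beta>\<^sup>2 - 1)\<^sup>2"

definition inv_density :: "real \<Rightarrow> real" where
  "inv_density t = 1 / sqrt (Delta t)"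

lemma Delta_identity:
  fixes c s g h :: real
  assumes s: "s\<^sup>2 = 1 - c\<^sup>2" and g: "g\<^sup>2 = \<alpha>\<^sup>2 * c\<^sup>2 + \<beta>\<^sup>2 * s\<^sup>2" and h: "h\<^sup>2 = 1 - g\<^sup>2"
  shows "(1 - \<alpha>\<^sup>2 + \<beta>\<^sup>2)\<^sup>2 * (c * g - s * h)\<^sup>2 + (1 + \<alpha>\<^sup>2 - \<beta>\<^sup>2)\<^sup>2 * (s * g + c * h)\<^sup>2
      - (\<alpha>\<^sup>2 + \<beta>\<^sup>2 - 1)\<^sup>2 = (2 * g * h - 2 * (\<beta>\<^sup>2 - \<alpha>\<^sup>2) * c * s)\<^sup>2"
proof -
  define u where "u = c\<^sup>2"
  define G where "G = \<alpha>\<^sup>2 * u + \<beta>\<^sup>2 * (1 - u)"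
  have g2: "g\<^sup>2 = G" using g s by (simp add: G_def u_def)
  have h2: "h\<^sup>2 = 1 - G" using h g2 by simp
  have s2: "s\<^sup>2 = 1 - u" using s by (simp add: u_def)
  have "(1 - \<alpha>\<^sup>2 + \<beta>\<^sup>2)\<^sup>2 * (c * g - s * h)\<^sup>2 + (1 + \<alpha>\<^sup>2 - \<beta>\<^sup>2)\<^sup>2 * (s * g + c * h)\<^sup>2
      - (\<alpha>\<^sup>2 + \<beta>\<^sup>2 - 1)\<^sup>2
    = (1 - \<alpha>\<^sup>2 + \<beta>\<^sup>2)\<^sup>2 * (c\<^sup>2 * g\<^sup>2 + s\<^sup>2 * h\<^sup>2) + (1 + \<alpha>\<^sup>2 - \<beta>\<^sup>2)\<^sup>2 * (s\<^sup>2 * g\<^sup>2 + c\<^sup>2 * h\<^sup>2)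
      - (\<alpha>\<^sup>2 + \<beta>\<^sup>2 - 1)\<^sup>2 - 8 * (\<beta>\<^sup>2 - \<alpha>\<^sup>2) * (c * s * g * h)"
    by (simp add: power2_eq_square algebra_simps)
  also have "\<dots> = 4 * G * (1 - G) + 4 * (\<beta>\<^sup>2 - \<alpha>\<^sup>2)\<^sup>2 * u * (1 - u)
      - 8 * (\<beta>\<^sup>2 - \<alpha>\<^sup>2) * (c * s * g * h)"
    unfolding g2 h2 s2 u_def[symmetric] by (simp add: G_def power2_eq_square algebra_simps)
  also have "\<dots> = 4 * (g\<^sup>2 * h\<^sup>2) - 8 * (\<beta>\<^sup>2 - \<alpha>\<^sup>2) * (c * s * g * h)
      + 4 * (\<beta>\<^sup>2 - \<alpha>\<^sup>2)\<^sup>2 * (c\<^sup>2 * s\<^sup>2)"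
    unfolding g2 h2 s2 u_def by (simp add: algebra_simps)
  also have "\<dots> = (2 * g * h - 2 * (\<beta>\<^sup>2 - \<alpha>\<^sup>2) * c * s)\<^sup>2"
    by (simp add: power2_eq_square algebra_simps)
  finally show ?thesis .
qed

lemma Delta_arc_end: "Delta (arc_end x) = (2 * support x * half_chord x - support_sq' x)\<^sup>2"
proof -
  have g: "(support x)\<^sup>2 = \<alpha>\<^sup>2 * (cos x)\<^sup>2 + \<beta>\<^sup>2 * (sin x)\<^sup>2"
    by (simp add: support_squared support_sq_def)
  have h: "(half_chord x)\<^sup>2 = 1 - (support x)\<^sup>2" by (simp add: half_chord_squared support_squared)
  show ?thesis unfolding Delta_def cos_arc_end sin_arc_end
    using Delta_identity[OF sin_squared_eq g h] by (simp add: support_sq'_def algebra_simps)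
qed

lemma Delta_arc_start: "Delta (arc_start x) = (2 * support x * half_chord x + support_sq' x)\<^sup>2"
proof -
  have s: "(- sin x)\<^sup>2 = 1 - (cos x)\<^sup>2" by (simp add: sin_squared_eq)
  have g: "(support x)\<^sup>2 = \<alpha>\<^sup>2 * (cos x)\<^sup>2 + \<beta>\<^sup>2 * (- sin x)\<^sup>2"
    by (simp add: support_squared support_sq_def)
  have h: "(half_chord x)\<^sup>2 = 1 - (support x)\<^sup>2" by (simp add: half_chord_squared support_squared)
  have "Delta (arc_start x) = (1 - \<alpha>\<^sup>2 + \<beta>\<^sup>2)\<^sup>2 * (cos x * support x - (- sin x) * half_chord x)\<^sup>2
      + (1 + \<alpha>\<^sup>2 - \<beta>\<^sup>2)\<^sup>2 * ((- sin x) * support x + cos x * half_chord x)\<^sup>2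
      - (\<alpha>\<^sup>2 + \<beta>\<^sup>2 - 1)\<^sup>2"
    unfolding Delta_def cos_arc_start sin_arc_start by (simp add: power2_eq_square algebra_simps)
  also have "\<dots> = (2 * support x * half_chord x - 2 * (\<beta>\<^sup>2 - \<alpha>\<^sup>2) * cos x * (- sin x))\<^sup>2"
    by (rule Delta_identity[OF s g h])
  finally show ?thesis by (simp add: support_sq'_def algebra_simps)
qed

lemma inv_density_arc_end: "inv_density (arc_end x) * (1 + half_arc' x) = 1 / (2 * support x * half_chord x)"
proof -
  have "2 * support x * half_chord x - support_sq' x = 2 * support x * half_chord x * (1 + half_arc' x)"
    using half_arc'_eq[of x] by (simp add: algebra_simps)
  then show ?thesis
    using arc_end_deriv_pos[of x] support_pos[of x] half_chord_pos[of x]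
    by (simp add: inv_density_def Delta_arc_end)
qed

lemma inv_density_arc_start: "inv_density (arc_start x) * (1 - half_arc' x) = 1 / (2 * support x * half_chord x)"
proof -
  have "2 * support x * half_chord x + support_sq' x = 2 * support x * half_chord x * (1 - half_arc' x)"
    using half_arc'_eq[of x] by (simp add: algebra_simps)
  then show ?thesis
    using arc_start_deriv_pos[of x] support_pos[of x] half_chord_pos[of x]
    by (simp add: inv_density_def Delta_arc_start)
qed

lemma Delta_pos: "0 < Delta t"
proof -
  have "0 < min (4 * \<beta>\<^sup>2 * (1 - \<alpha>\<^sup>2)) (4 * \<alpha>\<^sup>2 * (1 - \<beta>\<^sup>2))"
    using \<alpha>_pos \<alpha>_less_1 \<beta>_pos \<beta>_less_1 by (simp add: power_less_one_iff)
  also have "\<dots> * ((cos t)\<^sup>2 + (sin t)\<^sup>2)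
      \<le> 4 * \<beta>\<^sup>2 * (1 - \<alpha>\<^sup>2) * (cos t)\<^sup>2 + 4 * \<alpha>\<^sup>2 * (1 - \<beta>\<^sup>2) * (sin t)\<^sup>2"
    unfolding distrib_left by (intro add_mono mult_right_mono) auto
  also have "\<dots> = Delta t"
    unfolding Delta_def sin_squared_eq by (simp add: power2_eq_square algebra_simps)
  finally show ?thesis by simp
qed

lemma inv_density_pos: "0 < inv_density t"
  using Delta_pos[of t] by (simp add: inv_density_def)

lemma isCont_inv_density: "isCont inv_density t"
  unfolding inv_density_def[abs_def] Delta_def
  by (rule continuous_intros | use Delta_pos[of t, unfolded Delta_def] in simp)+

lemma inv_density_periodic: "inv_density (t + 2 * pi) = inv_density t"
  by (simp add: inv_density_def Delta_def)

lemma inv_density_invariant: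
  assumes F: "\<And>x. (F has_real_derivative inv_density x) (at x)"
  shows "F (arc_end x) - F (arc_start x) = F (arc_end 0) - F (arc_start 0)"
proof -
  have "((\<lambda>x. F (arc_end x) - F (arc_start x)) has_real_derivative 0) (at x)" for x
  proof -
    have "((\<lambda>x. F (arc_end x) - F (arc_start x)) has_real_derivative
        inv_density (arc_end x) * (1 + half_arc' x) - inv_density (arc_start x) * (1 - half_arc' x)) (at x)"
      by (rule derivative_eq_intros DERIV_chain2[OF F arc_end_deriv]
          DERIV_chain2[OF F arc_start_deriv] refl | simp)+
    then show ?thesis by (simp add: inv_density_arc_end inv_density_arc_start)
  qed
  from DERIV_isconst_all[OF allI[OF this], of x 0] show ?thesis by simp
qed

lemma weighted_density_cocycle:
  assumes F: "\<And>x. (F has_real_derivative cos (2 * x) * inv_density x) (at x)"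
  shows "F (arc_end x) - F (arc_start x) - cos (2 * x) = F (arc_end 0) - F (arc_start 0) - 1"
proof -
  have "((\<lambda>x. F (arc_end x) - F (arc_start x) - cos (2 * x)) has_real_derivative 0) (at x)" for x
  proof -
    have d: "((\<lambda>x. F (arc_end x) - F (arc_start x) - cos (2 * x)) has_real_derivative
        cos (2 * arc_end x) * inv_density (arc_end x) * (1 + half_arc' x)
        - cos (2 * arc_start x) * inv_density (arc_start x) * (1 - half_arc' x)
        - (- sin (2 * x) * (2 * 1))) (at x)"
      by (rule derivative_eq_intros DERIV_chain2[OF F arc_end_deriv]
          DERIV_chain2[OF F arc_start_deriv] refl | simp)+
    have "cos (2 * arc_end x) - cos (2 * arc_start x) = - 2 * sin (2 * x) * sin (2 * half_arc x)"
      by (simp add: arc_end_def arc_start_def distrib_left cos_add cos_diff)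
    also have "sin (2 * half_arc x) = 2 * support x * half_chord x"
      by (simp add: sin_double cos_half_arc sin_half_arc)
    finally have "cos (2 * arc_end x) * inv_density (arc_end x) * (1 + half_arc' x)
        - cos (2 * arc_start x) * inv_density (arc_start x) * (1 - half_arc' x) = - 2 * sin (2 * x)"
      using support_pos[of x] half_chord_pos[of x]
      by (simp add: mult.assoc inv_density_arc_end inv_density_arc_start diff_divide_distrib[symmetric])
    then show ?thesis using d by simp
  qed
  from DERIV_isconst_all[OF allI[OF this], of x 0] show ?thesis by simp
qed

lemma closed_chain_sum_cos_double:
  obtains \<kappa> where "\<And>n ps. 0 < n \<Longrightarrow>
      (\<forall>i<n. cis (arc_end (ps i)) = cis (arc_start (ps (Suc i mod n)))) \<or>
      (\<forall>i<n. cis (arc_start (ps i)) = cis (arc_end (ps (Suc i mod n)))) \<Longrightarrow>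
      (\<Sum>i<n. cos (2 * ps i)) = real n * \<kappa>"
proof -
  obtain \<Phi> where \<Phi>: "\<And>x. (\<Phi> has_real_derivative inv_density x) (at x)"
    using continuous_has_antiderivative isCont_inv_density by blast
  have "isCont (\<lambda>x. cos (2 * x) * inv_density x) x" for x
    by (intro continuous_intros isCont_inv_density)
  then obtain W where W: "\<And>x. (W has_real_derivative cos (2 * x) * inv_density x) (at x)"
    using continuous_has_antiderivative by blast
  define c where "c = \<Phi> (arc_end 0) - \<Phi> (arc_start 0)"
  define K where "K = W (arc_end 0) - W (arc_start 0) - 1"
  define L where "L = \<Phi> (2 * pi) - \<Phi> 0"
  define LW where "LW = W (2 * pi) - W 0"
  have \<Phi>_shift: "\<Phi> (x + 2 * pi) = \<Phi> x + L" for x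
    unfolding L_def by (rule antiderivative_periodic_shift[OF \<Phi> inv_density_periodic])
  have W_shift: "W (x + 2 * pi) = W x + LW" for x
    unfolding LW_def
  proof (rule antiderivative_periodic_shift[OF W])
    fix x :: real
    have "2 * (x + 2 * pi) = (2 * x + 2 * pi) + 2 * pi" by simp
    then have "cos (2 * (x + 2 * pi)) = cos (2 * x)" by (simp only: cos_periodic)
    then show "cos (2 * (x + 2 * pi)) * inv_density (x + 2 * pi) = cos (2 * x) * inv_density x"
      by (simp only: inv_density_periodic)
  qed
  have "\<Phi> 0 < \<Phi> (2 * pi)"
    by (rule DERIV_pos_imp_increasing[of 0]) (use \<Phi> inv_density_pos in auto)
  then have L_pos: "0 < L" by (simp add: L_def)
  have \<Phi>_c: "\<Phi> (arc_end x) - \<Phi> (arc_start x) = c" for x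
    unfolding c_def by (rule inv_density_invariant[OF \<Phi>])
  have W_K: "W (arc_end x) - W (arc_start x) = cos (2 * x) + K" for x
    using weighted_density_cocycle[OF W, of x] unfolding K_def by linarith
  have sum_\<Phi>: "(\<Sum>i<n. \<Phi> (arc_end (ps i)) - \<Phi> (arc_start (ps i))) = real n * c" for n ps
    by (simp add: \<Phi>_c)
  have sum_W: "(\<Sum>i<n. W (arc_end (ps i)) - W (arc_start (ps i))) = (\<Sum>i<n. cos (2 * ps i)) + real n * K"
    for n ps
    by (simp add: W_K sum.distrib)
  show thesis
  proof (rule that[of "c * LW / L - K"])
    fix n ps assume n: "0 < n" and chain:
      "(\<forall>i<n. cis (arc_end (ps i)) = cis (arc_start (ps (Suc i mod n)))) \<or>
       (\<forall>i<n. cis (arc_start (ps i)) = cis (arc_end (ps (Suc i mod n))))"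
    obtain k :: int where k_\<Phi>: "real n * c = of_int k * L"
      and k_W: "(\<Sum>i<n. cos (2 * ps i)) + real n * K = of_int k * LW"
    proof (cases "\<forall>i<n. cis (arc_end (ps i)) = cis (arc_start (ps (Suc i mod n)))")
      case True
      then have "\<And>i. i < n \<Longrightarrow> cis (arc_end (ps i)) = cis (arc_start (ps (Suc i mod n)))"
        by blast
      then show thesis
      proof (rule closed_chain_sum[of arc_end arc_start n ps, OF arc_end_periodic arc_start_periodic n])
        fix k :: int assume k_sum: "\<And>(F :: real \<Rightarrow> real) L. (\<And>x. F (x + 2 * pi) = F x + L) \<Longrightarrow>
          (\<Sum>i<n. F (arc_end (ps i)) - F (arc_start (ps i))) = of_int k * L"
        have "real n * c = of_int k * L" "(\<Sum>i<n. cos (2 * ps i)) + real n * K = of_int k * LW"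
          using k_sum[of \<Phi> L, OF \<Phi>_shift] k_sum[of W LW, OF W_shift]
          by (simp_all only: sum_\<Phi> sum_W)
        then show thesis by (rule that)
      qed
    next
      case False
      then have "\<And>i. i < n \<Longrightarrow> cis (arc_start (ps i)) = cis (arc_end (ps (Suc i mod n)))"
        using chain by blast
      then show thesis
      proof (rule closed_chain_sum[of arc_start arc_end n ps, OF arc_start_periodic arc_end_periodic n])
        fix k :: int assume k_sum: "\<And>(F :: real \<Rightarrow> real) L. (\<And>x. F (x + 2 * pi) = F x + L) \<Longrightarrow>
          (\<Sum>i<n. F (arc_start (ps i)) - F (arc_end (ps i))) = of_int k * L"
        have "- (real n * c) = of_int k * L"
          "- ((\<Sum>i<n. cos (2 * ps i)) + real n * K) = of_int k * LW"
          using k_sum[of \<Phi> L, OF \<Phi>_shift] k_sum[of W LW, OF W_shift] sum_\<Phi>[where n=n and ps=ps] sum_W[where n=n and ps=ps]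
          unfolding sum_subtractf by linarith+
        then show thesis by (intro that[of "- k"]) simp_all
      qed
    qed
    have k_eq: "of_int k = real n * c / L" using k_\<Phi> L_pos by (simp add: eq_divide_eq)
    have "(\<Sum>i<n. cos (2 * ps i)) = of_int k * LW - real n * K" using k_W by linarith
    also have "\<dots> = real n * (c * LW / L - K)" unfolding k_eq by (simp add: right_diff_distrib)
    finally show "(\<Sum>i<n. cos (2 * ps i)) = real n * (c * LW / L - K)" .
  qed
qed

lemma tangent_chord:
  assumes nx: "norm x = 1" and ny: "norm y = 1" and tangent: "tangent_line (ellipse 0 \<alpha> \<beta> 0) x y"
  obtains p where "x = cis (arc_start p)" "y = cis (arc_end p)"
    | p where "x = cis (arc_end p)" "y = cis (arc_start p)"
proof -
  define E where "E t = Complex (\<alpha> * cos t) (\<beta> * sin t)" for t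
  have "ellipse 0 \<alpha> \<beta> 0 = range E" by (auto simp: ellipse_def E_def)
  with tangent have xy: "x \<noteq> y" and "\<exists>!z. z \<in> range E \<and> z \<in> line_through x y"
    unfolding tangent_line_def by simp_all
  then obtain z0 where z0: "z0 \<in> range E" "z0 \<in> line_through x y"
    and uniq0: "\<And>z. z \<in> range E \<Longrightarrow> z \<in> line_through x y \<Longrightarrow> z = z0"
    by (auto simp: Ex1_def)
  obtain t0 where "z0 = E t0" using z0(1) by blast
  then have t0: "E t0 \<in> line_through x y" and uniq: "\<And>t. E t \<in> line_through x y \<Longrightarrow> E t = E t0"
    using z0(2) uniq0 by simp_all
  obtain p d where d: "0 < d" "d < pi" and xp: "x = cis (p - d)" and yp: "y = cis (p + d)"
    using unit_circle_chord[OF nx ny xy] by blast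
  have "sin d \<noteq> 0" using sin_gt_zero[OF d] by simp
  then have line: "E t \<in> line_through x y \<longleftrightarrow> \<alpha> * cos p * cos t + \<beta> * sin p * sin t = cos d" for t
    unfolding xp yp line_through_cis[OF \<open>sin d \<noteq> 0\<close>] by (simp add: E_def algebra_simps)
  have "(cos d)\<^sup>2 = (\<alpha> * cos p)\<^sup>2 + (\<beta> * sin p)\<^sup>2"
  proof (rule line_meets_unit_circle_once)
    show "0 < (\<alpha> * cos p)\<^sup>2 + (\<beta> * sin p)\<^sup>2"
      using support_sq_pos[of p] by (simp add: support_sq_def power_mult_distrib)
    show "(cos t0)\<^sup>2 + (sin t0)\<^sup>2 = 1" by simp
    show "\<alpha> * cos p * cos t0 + \<beta> * sin p * sin t0 = cos d" using t0 line by simp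
    fix c1 s1 assume "c1\<^sup>2 + s1\<^sup>2 = 1" and "\<alpha> * cos p * c1 + \<beta> * sin p * s1 = cos d"
    moreover obtain t1 where "c1 = cos t1" "s1 = sin t1"
      using sincos_total_2pi[OF \<open>c1\<^sup>2 + s1\<^sup>2 = 1\<close>] by blast
    ultimately have "E t1 = E t0" using uniq line by simp
    then show "c1 = cos t0 \<and> s1 = sin t0"
      using \<open>c1 = cos t1\<close> \<open>s1 = sin t1\<close> \<alpha>_pos \<beta>_pos by (simp add: E_def)
  qed
  then have cos_d_sq: "(cos d)\<^sup>2 = (support p)\<^sup>2"
    by (simp add: support_squared support_sq_def power_mult_distrib)
  show thesis
  proof (cases "cos d > 0")
    case True
    then have "cos d = support p" using cos_d_sq support_pos[of p] by (simp add: power2_eq_iff_nonneg)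
    then have "half_arc p = arccos (cos d)" by (simp only: half_arc_def)
    also have "\<dots> = d" using d by (simp add: arccos_cos)
    finally have "half_arc p = d" .
    then show thesis using xp yp by (intro that(1)[of p]) (simp_all add: arc_start_def arc_end_def)
  next
    case False
    have "support (p + pi) = support p" by (simp add: support_def support_sq_def)
    also have "\<dots> = cos (pi - d)"
    proof -
      have "cos d = support p \<or> cos d = - support p" using cos_d_sq by (simp add: power2_eq_iff)
      then show ?thesis using False support_pos[of p] by auto
    qed
    finally have "half_arc (p + pi) = arccos (cos (pi - d))" by (simp only: half_arc_def)
    also have "\<dots> = pi - d" by (rule arccos_cos) (use d in simp_all)
    finally have "half_arc (p + pi) = pi - d" .
    then have "arc_end (p + pi) = (p - d) + 2 * pi" and "arc_start (p + pi) = p + d"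
      by (simp_all add: arc_end_def arc_start_def)
    moreover have "cis (p - d + 2 * pi) = cis (p - d)"
      unfolding cis_eq_cis_iff by (rule exI[of _ 1]) simp
    ultimately show thesis using xp yp by (intro that(2)[of "p + pi"]) simp_all
  qed
qed

lemma strict_mono_arc_end: "strict_mono arc_end"
proof (rule strict_monoI)
  fix x y :: real assume "x < y"
  then show "arc_end x < arc_end y"
    by (rule DERIV_pos_imp_increasing[where f = arc_end]) (use arc_end_deriv arc_end_deriv_pos in blast)
qed

lemma strict_mono_arc_start: "strict_mono arc_start"
proof (rule strict_monoI)
  fix x y :: real assume "x < y"
  then show "arc_start x < arc_start y"
    by (rule DERIV_pos_imp_increasing[where f = arc_start]) (use arc_start_deriv arc_start_deriv_pos in blast)
qed

lemma cis_arc_end_eq_iff: "cis (arc_end x) = cis (arc_end y) \<longleftrightarrow> (\<exists>j::int. x = y + of_int j * (2 * pi))"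
proof -
  have "arc_end (y + of_int j * (2 * pi)) = arc_end y + of_int j * (2 * pi)" for j
    by (rule shift_by_int_periods) (simp add: arc_end_periodic)
  then show ?thesis
    unfolding cis_eq_cis_iff by (metis strict_mono_eq[OF strict_mono_arc_end])
qed

lemma cis_arc_start_eq_iff: "cis (arc_start x) = cis (arc_start y) \<longleftrightarrow> (\<exists>j::int. x = y + of_int j * (2 * pi))"
proof -
  have "arc_start (y + of_int j * (2 * pi)) = arc_start y + of_int j * (2 * pi)" for j
    by (rule shift_by_int_periods) (simp add: arc_start_periodic)
  then show ?thesis
    unfolding cis_eq_cis_iff by (metis strict_mono_eq[OF strict_mono_arc_start])
qed

text \<open>Two consecutive sides sharing a vertex with opposite orientations would have equal
  parameters (by injectivity of cis (arc_end x) and cis (arc_start x) modulo 2 pi), so the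
  polygon would go back along the same tangent; hence all sides have the same orientation.\<close>
lemma poncelet_chord_params:
  assumes P: "poncelet_ngon (sphere 0 1) (ellipse 0 \<alpha> \<beta> 0) n x"
  obtains ps where "\<forall>i<n. x i = cis (arc_start (ps i)) \<and> x (Suc i mod n) = cis (arc_end (ps i))"
    | ps where "\<forall>i<n. x i = cis (arc_end (ps i)) \<and> x (Suc i mod n) = cis (arc_start (ps i))"
proof -
  from P have n: "0 < n" and on_circle: "\<And>i. i < n \<Longrightarrow> norm (x i) = 1"
    and tangent: "\<And>i. i < n \<Longrightarrow> tangent_line (ellipse 0 \<alpha> \<beta> 0) (x i) (x (Suc i mod n))"
    and no_return: "\<And>i. i < n \<Longrightarrow> x (Suc (Suc i) mod n) \<noteq> x i"
    by (auto simp: poncelet_ngon_def)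
  define side where "side i p fw \<longleftrightarrow>
      (fw \<and> x i = cis (arc_start p) \<and> x (Suc i mod n) = cis (arc_end p)) \<or>
      (\<not> fw \<and> x i = cis (arc_end p) \<and> x (Suc i mod n) = cis (arc_start p))" for i p fw
  have "\<exists>p fw. side i p fw" if "i < n" for i
  proof -
    have "Suc i mod n < n" using n by simp
    then show ?thesis
      by (rule tangent_chord[OF on_circle[OF that] on_circle tangent[OF that]])
        (auto simp: side_def)
  qed
  then obtain ps fw where side: "\<And>i. i < n \<Longrightarrow> side i (ps i) (fw i)" by metis
  have fw_step: "fw (Suc i mod n) = fw i" if i: "i < n" for i
  proof (rule ccontr)
    assume ne: "fw (Suc i mod n) \<noteq> fw i"
    define j where "j = Suc i mod n"
    have j: "j < n" and jj: "Suc j mod n = Suc (Suc i) mod n" using n by (simp_all add: j_def mod_Suc_eq)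
    have "x (Suc (Suc i) mod n) = x i"
      using side[OF i] side[OF j] ne jj cis_arc_end_eq_iff cis_arc_start_eq_iff
      by (auto simp: side_def j_def)
    then show False using no_return[OF i] by simp
  qed
  have fw_const: "fw i = fw 0" if "i < n" for i
    using that
  proof (induction i)
    case (Suc i)
    then show ?case using fw_step[of i] by simp
  qed simp
  show thesis
  proof (cases "fw 0")
    case True
    have "\<forall>i<n. x i = cis (arc_start (ps i)) \<and> x (Suc i mod n) = cis (arc_end (ps i))"
      using side fw_const True unfolding side_def by blast
    then show thesis by (rule that(1))
  next
    case False
    have "\<forall>i<n. x i = cis (arc_end (ps i)) \<and> x (Suc i mod n) = cis (arc_start (ps i))"
      using side fw_const False unfolding side_def by blast
    then show thesis by (rule that(2))
  qed
qed

lemma poncelet_cos_angle_sum: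
  obtains K where "\<And>n x. poncelet_ngon (sphere 0 1) (ellipse 0 \<alpha> \<beta> 0) n x \<Longrightarrow>
    (\<Sum>i<n. cos (angle_at 0 (x i) (x (Suc i mod n)))) = real n * K"
proof (rule closed_chain_sum_cos_double)
  fix \<kappa> assume \<kappa>: "\<And>n ps. 0 < n \<Longrightarrow>
      (\<forall>i<n. cis (arc_end (ps i)) = cis (arc_start (ps (Suc i mod n)))) \<or>
      (\<forall>i<n. cis (arc_start (ps i)) = cis (arc_end (ps (Suc i mod n)))) \<Longrightarrow>
      (\<Sum>i<n. cos (2 * ps i)) = real n * \<kappa>"
  define A where "A = \<alpha>\<^sup>2 + \<beta>\<^sup>2 - 1"
  define B where "B = \<alpha>\<^sup>2 - \<beta>\<^sup>2"
  have chord: "cos (angle_at 0 (cis (arc_start p)) (cis (arc_end p))) = A + B * cos (2 * p)"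
    "cos (angle_at 0 (cis (arc_end p)) (cis (arc_start p))) = A + B * cos (2 * p)" for p
    using cos_chord_angle[of p] by (simp_all add: cos_angle_at_cis A_def B_def cos_diff mult.commute)
  have "(\<Sum>i<n. cos (angle_at 0 (x i) (x (Suc i mod n)))) = real n * (A + B * \<kappa>)"
    if P: "poncelet_ngon (sphere 0 1) (ellipse 0 \<alpha> \<beta> 0) n x" for n x
  proof -
    have n: "0 < n" using P by (simp add: poncelet_ngon_def)
    have succ: "Suc i mod n < n" for i using n by simp
    obtain ps where angles: "\<And>i. i < n \<Longrightarrow> cos (angle_at 0 (x i) (x (Suc i mod n))) = A + B * cos (2 * ps i)"
      and chain: "(\<forall>i<n. cis (arc_end (ps i)) = cis (arc_start (ps (Suc i mod n)))) \<or>
        (\<forall>i<n. cis (arc_start (ps i)) = cis (arc_end (ps (Suc i mod n))))"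
    proof (rule poncelet_chord_params[OF P])
      fix ps assume fw: "\<forall>i<n. x i = cis (arc_start (ps i)) \<and> x (Suc i mod n) = cis (arc_end (ps i))"
      show thesis
      proof (rule that[of ps])
        show "cos (angle_at 0 (x i) (x (Suc i mod n))) = A + B * cos (2 * ps i)" if "i < n" for i
          using fw[rule_format, OF that] by (simp add: chord)
        have "cis (arc_end (ps i)) = cis (arc_start (ps (Suc i mod n)))" if "i < n" for i
          using fw[rule_format, OF that] fw[rule_format, OF succ[of i]] by simp
        then show "(\<forall>i<n. cis (arc_end (ps i)) = cis (arc_start (ps (Suc i mod n)))) \<or>
          (\<forall>i<n. cis (arc_start (ps i)) = cis (arc_end (ps (Suc i mod n))))" by blast
      qed
    next
      fix ps assume bw: "\<forall>i<n. x i = cis (arc_end (ps i)) \<and> x (Suc i mod n) = cis (arc_start (ps i))"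
      show thesis
      proof (rule that[of ps])
        show "cos (angle_at 0 (x i) (x (Suc i mod n))) = A + B * cos (2 * ps i)" if "i < n" for i
          using bw[rule_format, OF that] by (simp add: chord)
        have "cis (arc_start (ps i)) = cis (arc_end (ps (Suc i mod n)))" if "i < n" for i
          using bw[rule_format, OF that] bw[rule_format, OF succ[of i]] by simp
        then show "(\<forall>i<n. cis (arc_end (ps i)) = cis (arc_start (ps (Suc i mod n)))) \<or>
          (\<forall>i<n. cis (arc_start (ps i)) = cis (arc_end (ps (Suc i mod n))))" by blast
      qed
    qed
    have "(\<Sum>i<n. cos (angle_at 0 (x i) (x (Suc i mod n)))) = (\<Sum>i<n. A + B * cos (2 * ps i))"
      by (rule sum.cong) (simp_all add: angles)
    also have "\<dots> = real n * A + B * (\<Sum>i<n. cos (2 * ps i))"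
      by (simp add: sum.distrib sum_distrib_left)
    also have "\<dots> = real n * (A + B * \<kappa>)"
      using \<kappa>[OF n chain] by (simp add: algebra_simps)
    finally show ?thesis .
  qed
  then show thesis by (rule that)
qed

end

lemma poncelet_cos_angle_sum_const:
  fixes c :: complex and R a b phi :: real
  assumes R: "R > 0" and a: "a > 0" and b: "b > 0" and inside: "ellipse c a b phi \<subseteq> ball c R"
  obtains K where "\<And>n u. poncelet_ngon (sphere c R) (ellipse c a b phi) n u \<Longrightarrow>
    (\<Sum>i<n. cos (angle_at c (u i) (u (Suc i mod n)))) = real n * K"
proof -
  interpret unit_disc_ellipse "a / R" "b / R"
    using a b R ellipse_subset_ball_semi_axes[OF inside] by unfold_locales simp_all
  show thesis
  proof (rule poncelet_cos_angle_sum)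
    fix K assume K: "\<And>n x. poncelet_ngon (sphere 0 1) (ellipse 0 (a / R) (b / R) 0) n x \<Longrightarrow>
      (\<Sum>i<n. cos (angle_at 0 (x i) (x (Suc i mod n)))) = real n * K"
    define s where "s = of_real R * cis phi"
    have s: "s \<noteq> 0" "norm s = R" using R by (simp_all add: s_def norm_mult)
    have "(\<Sum>i<n. cos (angle_at c (u i) (u (Suc i mod n)))) = real n * K"
      if P: "poncelet_ngon (sphere c R) (ellipse c a b phi) n u" for n u
    proof -
      define x where "x i = (u i - c) / s" for i
      have u: "u = (\<lambda>i. c + s * x i)" using s by (simp add: x_def)
      have "sphere c R = (\<lambda>z. c + s * z) ` sphere 0 1" using sphere_affine[OF s(1)] s(2) by simp
      moreover have "ellipse c a b phi = (\<lambda>z. c + s * z) ` ellipse 0 (a / R) (b / R) 0"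
        using ellipse_affine[of R c a b phi] R by (simp add: s_def)
      ultimately have "poncelet_ngon ((\<lambda>z. c + s * z) ` sphere 0 1)
          ((\<lambda>z. c + s * z) ` ellipse 0 (a / R) (b / R) 0) n (\<lambda>i. c + s * x i)"
        using P u by simp
      then have "poncelet_ngon (sphere 0 1) (ellipse 0 (a / R) (b / R) 0) n x"
        using poncelet_ngon_affine[OF s(1)] by blast
      then show ?thesis using K by (simp add: u angle_at_affine[OF s(1)])
    qed
    then show thesis by (rule that)
  qed
qed

theorem theorem4p1:
  fixes c :: complex and R a b phi :: real and n :: nat and u :: "nat \<Rightarrow> complex"
  assumes "R > 0" and "a > 0" and "b > 0"
    and "ellipse c a b phi \<subseteq> ball c R"
    and "poncelet_ngon (sphere c R) (ellipse c a b phi) n u"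
  shows "\<forall>v \<in> poncelet_family c (sphere c R) (ellipse c a b phi) n u.
           (\<Sum>i<n. cos (angle_at c (v i) (v (Suc i mod n))))
         = (\<Sum>i<n. cos (angle_at c (u i) (u (Suc i mod n))))"
proof (rule poncelet_cos_angle_sum_const[OF assms(1-4)])
  fix K assume K: "\<And>n u. poncelet_ngon (sphere c R) (ellipse c a b phi) n u \<Longrightarrow>
    (\<Sum>i<n. cos (angle_at c (u i) (u (Suc i mod n)))) = real n * K"
  show ?thesis
    using K[OF assms(5)] K by (auto simp: poncelet_family_def)
qed

end
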